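(* Let $(X,d)$ be a finite metric space and $k$ a positive integer. For a nonempty $S\subseteq X$ and $t\in[k]$, let $(\mathcal{C}_1,\dots,\mathcal{C}_t)$ be the output of $\mathtt{recMSD}(S,t)$, and let $\operatorname{opt}_i(S)$ denote the cost of an optimal $i$-clustering of $S$. Then for every $\varepsilon\in[0,1)$ and every $r\in\{1,\dots,t\}$, $$\Pr\left[\operatorname{cost}(\mathcal{C}_r)\le \frac{\operatorname{opt}_r(S)}{1-\varepsilon}\right]\ge \varepsilon^{r-1}.$$
   Context: An $i$-clustering of a set $S$ is a collection of at most $i$ subsets whose union is $S$; its cost is $\operatorname{cost}(\mathcal{C})=\sum_{C\in\mathcal{C}}\operatorname{diam}(C)$ with $\operatorname{diam}(C)=\max_{p,q\in C}d(p,q)$. $\operatorname{Ball}(x,R)=\{z\in X: d(x,z)\le R\}$. The randomized procedure $\mathtt{recMSD}(S,t)$ (for nonempty $S\subseteq X$, $t\in[k]$) is: set $\mathcal{C}_i\gets\{S\}$ for all $i\in\{1,\dots,t\}$; if $t=1$ or $|S|=1$, return $(\mathcal{C}_1,\dots,\mathcal{C}_t)$. Otherwise let $x,y\in S$ with $d(x,y)=\operatorname{diam}(S)$, choose $R\in[0,\operatorname{diam}(S)]$ uniformly at random, let $S_1=S\cap\operatorname{Ball}(x,R)$ and $S_2=S\setminus\operatorname{Ball}(x,R)$, compute (with independent randomness) $\mathcal{A}=\mathtt{recMSD}(S_1,t-1)$ and $\mathcal{B}=\mathtt{recMSD}(S_2,t-1)$; then for all $i,j\in\{1,\dots,t-1\}$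 with $i+j\le t$, if $\operatorname{cost}(\mathcal{A}_i\cup\mathcal{B}_j)<\operatorname{cost}(\mathcal{C}_{i+j})$ set $\mathcal{C}_{i+j}\gets\mathcal{A}_i\cup\mathcal{B}_j$. Return $(\mathcal{C}_1,\dots,\mathcal{C}_t)$. *)

theory Defs
  imports "HOL-Probability.Probability"
begin

definition diam :: "('a \<Rightarrow> 'a \<Rightarrow> real) \<Rightarrow> 'a set \<Rightarrow> real" where
  "diam d C = (if C = {} then 0 else Max {d p q | p q. p \<in> C \<and> q \<in> C})"

definition cost :: "('a \<Rightarrow> 'a \<Rightarrow> real) \<Rightarrow> 'a set set \<Rightarrow> real" where
  "cost d Cs = (\<Sum>C\<in>Cs. diam d C)"

definition is_clustering :: "nat \<Rightarrow> 'a set \<Rightarrow> 'a set set \<Rightarrow> bool" where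
  "is_clustering i S Cs \<longleftrightarrow> finite Cs \<and> card Cs \<le> i \<and> \<Union>Cs = S"

definition opt :: "('a \<Rightarrow> 'a \<Rightarrow> real) \<Rightarrow> nat \<Rightarrow> 'a set \<Rightarrow> real" where
  "opt d i S = Inf {cost d Cs | Cs. is_clustering i S Cs}"

definition metric_on :: "'a set \<Rightarrow> ('a \<Rightarrow> 'a \<Rightarrow> real) \<Rightarrow> bool" where
  "metric_on X d \<longleftrightarrow> (\<forall>x\<in>X. \<forall>y\<in>X. d x y \<ge> 0 \<and> (d x y = 0 \<longleftrightarrow> x = y) \<and> d x y = d y x)
     \<and> (\<forall>x\<in>X. \<forall>y\<in>X. \<forall>z\<in>X. d x z \<le> d x y + d y z)"

definition diam_selector :: "'a set \<Rightarrow> ('a \<Rightarrow> 'a \<Rightarrow> real) \<Rightarrow> ('a set \<Rightarrow> 'a \<times> 'a) \<Rightarrow> bool" where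
  "diam_selector X d sel \<longleftrightarrow> (\<forall>S. S \<subseteq> X \<and> S \<noteq> {} \<longrightarrow>
      fst (sel S) \<in> S \<and> snd (sel S) \<in> S \<and> d (fst (sel S)) (snd (sel S)) = diam d S)"

definition combine :: "('a \<Rightarrow> 'a \<Rightarrow> real) \<Rightarrow> nat \<Rightarrow> (nat \<Rightarrow> 'a set set) \<Rightarrow> (nat \<Rightarrow> 'a set set)
   \<Rightarrow> (nat \<Rightarrow> 'a set set) \<Rightarrow> (nat \<Rightarrow> 'a set set)" where
  "combine d t A B C0 = foldl (\<lambda>C (i,j). if cost d (A i \<union> B j) < cost d (C (i+j))
                                           then C((i+j) := A i \<union> B j) else C)
      C0 [(i,j). i \<leftarrow> [1..<t], j \<leftarrow> [1..<t], i + j \<le> t]"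

text \<open>recMSD, with its randomness supplied explicitly: each node of the recursion tree is
  identified by its path p (a list of 0/1 choices), and uses its own random number
  \<omega> p \<in> [0,1]; the radius is R = \<omega> p * diam S, uniform on [0, diam S] when \<omega> p is
  uniform on [0,1].  The output is the map i \<mapsto> C_i (meaningful for 1 \<le> i \<le> t).\<close>
fun recMSD :: "('a set \<Rightarrow> 'a \<times> 'a) \<Rightarrow> ('a \<Rightarrow> 'a \<Rightarrow> real) \<Rightarrow> (nat list \<Rightarrow> real) \<Rightarrow> nat list
      \<Rightarrow> 'a set \<Rightarrow> nat \<Rightarrow> (nat \<Rightarrow> 'a set set)" where
  "recMSD sel d \<omega> p S 0 = (\<lambda>i. {S})"
| "recMSD sel d \<omega> p S (Suc t') =
     (if t' = 0 \<or> card S \<le> 1 then (\<lambda>i. {S})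
      else (let x = fst (sel S);
                R = \<omega> p * diam d S;
                S1 = {z \<in> S. d x z \<le> R};
                S2 = S - S1;
                A = recMSD sel d \<omega> (0 # p) S1 t';
                B = recMSD sel d \<omega> (1 # p) S2 t'
            in combine d (Suc t') A B (\<lambda>i. {S})))"

definition rand_space :: "(nat list \<Rightarrow> real) measure" where
  "rand_space = PiM UNIV (\<lambda>_. uniform_measure lborel {0..1::real})"

end

(*
  Let D = diam S, realised by the selected pair x, y, and let Q be an optimal
  r-clustering of S.  Every output has cost at most D, so we may assume opt_r(S) < (1 - eps) D;
  then x and y lie in different clusters of Q and r >= 2.  The ball of radius u D around x
  splits a cluster C only for u in an interval of length at most diam C / D, so with
  probability at least 1 - opt_r(S) / D >= eps it splits no cluster of Q.  Then the clusters
  inside the ball form an i-clustering of S1 and the others a j-clustering of S2, with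
  i + j = r, i, j >= 1 and costs adding up to opt_r(S).  The two recursive calls use disjoint
  parts of the randomness; by induction they succeed with probabilities at least eps^(i-1) and
  eps^(j-1), and the combination step then yields an r-clustering of cost at most
  opt_r(S) / (1 - eps).  Altogether the success probability is at least
  eps * eps^(i-1) * eps^(j-1) = eps^(r-1).
*)
theory Submission
  imports Defs
begin

subsection \<open>Clusterings\<close>

lemma diam_ge:
  assumes "finite C" "p \<in> C" "q \<in> C"
  shows "d p q \<le> diam d C"
proof -
  have "{d p q | p q. p \<in> C \<and> q \<in> C} = (\<lambda>(p,q). d p q) ` (C \<times> C)" by auto
  then show ?thesis unfolding diam_def using assms by (auto intro!: Max_ge)
qed

lemma finite_clusterings: "finite S \<Longrightarrow> finite {Cs. is_clustering i S Cs}"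
  by (rule finite_subset[of _ "Pow (Pow S)"]) (auto simp: is_clustering_def)

lemma opt_le:
  assumes "finite S" "is_clustering i S Q"
  shows "opt d i S \<le> cost d Q"
proof -
  have "{cost d Cs | Cs. is_clustering i S Cs} = cost d ` {Cs. is_clustering i S Cs}" by auto
  then have "finite {cost d Cs | Cs. is_clustering i S Cs}"
    using finite_clusterings[OF assms(1)] by simp
  then show ?thesis unfolding opt_def using assms(2) by (auto intro: cInf_lower bdd_below_finite)
qed

lemma opt_attained:
  assumes "finite S" "1 \<le> i"
  obtains Q where "is_clustering i S Q" "{} \<notin> Q" "cost d Q = opt d i S"
proof -
  have costs: "{cost d Cs | Cs. is_clustering i S Cs} = cost d ` {Cs. is_clustering i S Cs}" by auto
  have fin: "finite (cost d ` {Cs. is_clustering i S Cs})"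
    using finite_clusterings[OF assms(1)] by simp
  have "is_clustering i S {S}" using assms(2) by (simp add: is_clustering_def)
  then have "opt d i S \<in> cost d ` {Cs. is_clustering i S Cs}"
    unfolding opt_def costs using fin by (subst cInf_eq_Min) (auto intro!: Min_in)
  then obtain Q where Q: "is_clustering i S Q" "cost d Q = opt d i S" by auto
  have "is_clustering i S (Q - {{}})"
    using Q(1) card_Diff1_le[of Q "{}"] by (auto simp: is_clustering_def)
  moreover have "cost d (Q - {{}}) = cost d Q"
    unfolding cost_def using Q(1) by (intro sum.mono_neutral_left) (auto simp: is_clustering_def diam_def)
  ultimately show ?thesis using that Q(2) by auto
qed

lemma clustering_split:
  assumes Q: "is_clustering r S Q" "{} \<notin> Q" and T: "T \<subseteq> S" "T \<noteq> {}" "S - T \<noteq> {}"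
    and uncut: "\<forall>C\<in>Q. C \<subseteq> T \<or> C \<subseteq> S - T"
  obtains i j Q1 Q2 where "is_clustering i T Q1" "is_clustering j (S - T) Q2"
    "1 \<le> i" "1 \<le> j" "i + j = r" "cost d Q1 + cost d Q2 = cost d Q"
proof -
  define Q1 where "Q1 = {C\<in>Q. C \<subseteq> T}"
  define Q2 where "Q2 = {C\<in>Q. C \<subseteq> S - T}"
  have fin: "finite Q1" "finite Q2" using Q(1) by (auto simp: Q1_def Q2_def is_clustering_def)
  have "C = {}" if "C \<subseteq> T" "C \<subseteq> S - T" for C using that by blast
  with Q(2) have disj: "Q1 \<inter> Q2 = {}" unfolding Q1_def Q2_def by blast
  have un: "Q1 \<union> Q2 = Q" using uncut by (auto simp: Q1_def Q2_def)
  have "\<Union>Q = S" using Q(1) by (simp add: is_clustering_def)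
  then have U1: "\<Union>Q1 = T" and U2: "\<Union>Q2 = S - T"
    using T(1) uncut unfolding Q1_def Q2_def by blast+
  have "card Q1 + card Q2 \<le> r"
    using card_Un_disjoint[OF fin disj] un Q(1) by (simp add: is_clustering_def)
  moreover have "1 \<le> card Q1" "1 \<le> card Q2"
    using U1 U2 T fin by (auto simp: Suc_le_eq card_gt_0_iff)
  moreover have "cost d Q1 + cost d Q2 = cost d Q"
    unfolding cost_def using sum.union_disjoint[OF fin disj, of "diam d"] un by simp
  ultimately show ?thesis
    using that[of "card Q1" Q1 "r - card Q1" Q2] fin U1 U2 by (simp add: is_clustering_def)
qed

locale finite_metric =
  fixes X :: "'a set" and d :: "'a \<Rightarrow> 'a \<Rightarrow> real"
  assumes finite_space: "finite X" and metric: "metric_on X d"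
begin

lemma dist_self: "x \<in> X \<Longrightarrow> d x x = 0"
  using metric unfolding metric_on_def by blast

lemma triangle: "x \<in> X \<Longrightarrow> y \<in> X \<Longrightarrow> z \<in> X \<Longrightarrow> d x z \<le> d x y + d y z"
  using metric unfolding metric_on_def by blast

lemma finite_subspace: "C \<subseteq> X \<Longrightarrow> finite C"
  by (rule finite_subset[OF _ finite_space])

lemma diam_nonneg:
  assumes "C \<subseteq> X"
  shows "0 \<le> diam d C"
proof (cases "C = {}")
  case False
  then obtain p where "p \<in> C" by auto
  then show ?thesis using diam_ge[OF finite_subspace[OF assms], of p p d] dist_self assms by auto
qed (simp add: diam_def)

lemma cost_nonneg: "\<forall>C\<in>Cs. C \<subseteq> X \<Longrightarrow> 0 \<le> cost d Cs"
  unfolding cost_def by (auto intro: sum_nonneg diam_nonneg)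

lemma cost_Un_le:
  assumes "finite A" "finite B" "\<forall>C\<in>A \<union> B. C \<subseteq> X"
  shows "cost d (A \<union> B) \<le> cost d A + cost d B"
proof -
  have "cost d (A \<union> B) = cost d A + cost d B - cost d (A \<inter> B)"
    unfolding cost_def using sum_Un[OF assms(1,2)] by simp
  moreover have "0 \<le> cost d (A \<inter> B)" using assms(3) by (intro cost_nonneg) auto
  ultimately show ?thesis by simp
qed

lemma opt_nonneg:
  assumes "S \<subseteq> X" "1 \<le> i"
  shows "0 \<le> opt d i S"
proof -
  obtain Q where "is_clustering i S Q" "cost d Q = opt d i S"
    using opt_attained[OF finite_subspace[OF assms(1)] assms(2)] by metis
  then show ?thesis using cost_nonneg[of Q] assms(1) by (auto simp: is_clustering_def)
qed

text \<open>Two points farther apart than the cost of a clustering lie in different clusters.\<close>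
lemma clustering_card_ge_2:
  assumes "is_clustering r S Q" "S \<subseteq> X" "x \<in> S" "y \<in> S" "cost d Q < d x y"
  shows "2 \<le> r"
proof -
  obtain Cx Cy where C: "Cx \<in> Q" "x \<in> Cx" "Cy \<in> Q" "y \<in> Cy"
    using assms(1,3,4) by (auto simp: is_clustering_def)
  have QX: "\<forall>C\<in>Q. C \<subseteq> X" using assms(1,2) by (auto simp: is_clustering_def)
  have "Cx \<noteq> Cy"
  proof
    assume "Cx = Cy"
    then have "d x y \<le> diam d Cx" using C QX by (intro diam_ge finite_subspace) auto
    also have "\<dots> \<le> cost d Q" unfolding cost_def
      using C(1) QX assms(1) by (intro member_le_sum diam_nonneg) (auto simp: is_clustering_def)
    finally show False using assms(5) by simp
  qed
  then have "card {Cx, Cy} \<le> card Q"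
    using C assms(1) by (intro card_mono) (auto simp: is_clustering_def)
  with \<open>Cx \<noteq> Cy\<close> assms(1) show ?thesis by (simp add: is_clustering_def)
qed

end

subsection \<open>The recursion\<close>

definition combine_step ::
    "('a \<Rightarrow> 'a \<Rightarrow> real) \<Rightarrow> (nat \<Rightarrow> 'a set set) \<Rightarrow> (nat \<Rightarrow> 'a set set)
      \<Rightarrow> (nat \<Rightarrow> 'a set set) \<Rightarrow> nat \<times> nat \<Rightarrow> (nat \<Rightarrow> 'a set set)" where
  "combine_step d A B = (\<lambda>C (i,j). if cost d (A i \<union> B j) < cost d (C (i+j))
                                    then C((i+j) := A i \<union> B j) else C)"

lemma combine_eq_foldl:
  "combine d t A B C0 = foldl (combine_step d A B) C0 [(i,j). i \<leftarrow> [1..<t], j \<leftarrow> [1..<t], i + j \<le> t]"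
  unfolding combine_def combine_step_def by simp

lemma foldl_combine_step_cost_le: "cost d (foldl (combine_step d A B) C ps k) \<le> cost d (C k)"
proof (induction ps arbitrary: C)
  case (Cons p ps)
  have "cost d (combine_step d A B C p k) \<le> cost d (C k)"
    by (cases p) (auto simp: combine_step_def)
  then show ?case using Cons.IH[of "combine_step d A B C p"] by simp
qed simp

lemma foldl_combine_step_cost_le_pair:
  "(i,j) \<in> set ps \<Longrightarrow> cost d (foldl (combine_step d A B) C ps (i+j)) \<le> cost d (A i \<union> B j)"
proof (induction ps arbitrary: C)
  case (Cons p ps)
  show ?case
  proof (cases "p = (i,j)")
    case True
    have "cost d (combine_step d A B C p (i+j)) \<le> cost d (A i \<union> B j)"
      by (auto simp: True combine_step_def)
    then show ?thesis
      using foldl_combine_step_cost_le[of d A B "combine_step d A B C p" ps "i+j"] by simp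
  qed (use Cons in simp)
qed simp

lemma foldl_combine_step_preserves:
  assumes "\<And>i. P (C i)" "\<And>i j. P (A i \<union> B j)"
  shows "P (foldl (combine_step d A B) C ps k)"
  using assms(1)
proof (induction ps arbitrary: C)
  case (Cons p ps)
  have "P (combine_step d A B C p k)" for k
    using Cons.prems assms(2) by (cases p) (auto simp: combine_step_def)
  then show ?case using Cons.IH by simp
qed simp

lemma combine_cost_le: "cost d (combine d t A B C0 k) \<le> cost d (C0 k)"
  unfolding combine_eq_foldl by (rule foldl_combine_step_cost_le)

lemma combine_cost_le_pair:
  assumes "1 \<le> i" "1 \<le> j" "i + j \<le> t"
  shows "cost d (combine d t A B C0 (i+j)) \<le> cost d (A i \<union> B j)"
  unfolding combine_eq_foldl by (rule foldl_combine_step_cost_le_pair) (use assms in auto)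

lemma combine_preserves:
  assumes "\<And>i. P (C0 i)" "\<And>i j. P (A i \<union> B j)"
  shows "P (combine d t A B C0 k)"
  unfolding combine_eq_foldl using assms by (rule foldl_combine_step_preserves)

definition root_ball :: "('a set \<Rightarrow> 'a \<times> 'a) \<Rightarrow> ('a \<Rightarrow> 'a \<Rightarrow> real) \<Rightarrow> 'a set \<Rightarrow> real \<Rightarrow> 'a set" where
  "root_ball sel d S u = {z \<in> S. d (fst (sel S)) z \<le> u * diam d S}"

text \<open>Paths grow at the front, so node \<open>q\<close> of the subtree rooted at \<open>p\<close> is node \<open>q @ p\<close>.\<close>
definition subtree :: "nat list \<Rightarrow> (nat list \<Rightarrow> 'b) \<Rightarrow> nat list \<Rightarrow> 'b" where
  "subtree p \<omega> = (\<lambda>q. \<omega> (q @ p))"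

lemma recMSD_append_path: "recMSD sel d \<omega> (q @ p) S t = recMSD sel d (subtree p \<omega>) q S t"
proof (induction t arbitrary: q S)
  case (Suc t)
  show ?case using Suc.IH[of "0 # q"] Suc.IH[of "Suc 0 # q"] by (simp add: Let_def subtree_def)
qed simp

lemma recMSD_Suc_split:
  assumes "t \<noteq> 0" "\<not> card S \<le> 1" "root_ball sel d S (\<omega> []) = T"
  shows "recMSD sel d \<omega> [] S (Suc t) =
    combine d (Suc t) (recMSD sel d (subtree [0] \<omega>) [] T t)
      (recMSD sel d (subtree [1] \<omega>) [] (S - T) t) (\<lambda>_. {S})"
  using assms recMSD_append_path[of sel d \<omega> "[]"] by (simp add: Let_def root_ball_def)

lemma recMSD_clusters: "finite (recMSD sel d \<omega> p S t i) \<and> (\<forall>C\<in>recMSD sel d \<omega> p S t i. C \<subseteq> S)"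
proof (induction t arbitrary: p S i)
  case (Suc t)
  define T where "T = root_ball sel d S (\<omega> p)"
  have "T \<subseteq> S" by (auto simp: T_def root_ball_def)
  then have "finite (recMSD sel d \<omega> (0#p) T t a \<union> recMSD sel d \<omega> (1#p) (S - T) t b) \<and>
      (\<forall>C\<in>recMSD sel d \<omega> (0#p) T t a \<union> recMSD sel d \<omega> (1#p) (S - T) t b. C \<subseteq> S)" for a b
    using Suc.IH[of "0#p" T a] Suc.IH[of "1#p" "S - T" b] by auto
  then show ?case
    by (auto simp: Let_def T_def root_ball_def
        intro!: combine_preserves[where P="\<lambda>Cs. finite Cs \<and> (\<forall>C\<in>Cs. C \<subseteq> S)"])
qed simp

lemma cost_recMSD_le_diam: "cost d (recMSD sel d \<omega> p S t i) \<le> diam d S"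
  using combine_cost_le[of d _ _ _ "\<lambda>_. {S}" i] by (cases t) (auto simp: Let_def cost_def)

subsection \<open>The random source\<close>

abbreviation uniform01 :: "real measure" where
  "uniform01 \<equiv> uniform_measure lborel {0..1}"

interpretation uniform01: prob_space uniform01
  by (rule prob_space_uniform_measure) auto

interpretation rand: prob_space rand_space
  unfolding rand_space_def by (rule prob_space_PiM) (rule uniform01.prob_space_axioms)

lemma space_rand_space [simp]: "space rand_space = UNIV"
  unfolding rand_space_def by (simp add: space_PiM)

lemma measurable_node: "(\<lambda>\<omega>. \<omega> p) \<in> rand_space \<rightarrow>\<^sub>M uniform01"
  unfolding rand_space_def by (rule measurable_component_singleton) auto

lemma distr_node: "distr rand_space uniform01 (\<lambda>\<omega>. \<omega> p) = uniform01"
  unfolding rand_space_def by (rule distr_PiM_component) (auto intro: uniform01.prob_space_axioms)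

lemma measurable_subtree: "subtree p \<in> rand_space \<rightarrow>\<^sub>M rand_space"
proof -
  have "(\<lambda>\<omega> q. \<omega> (q @ p)) \<in> rand_space \<rightarrow>\<^sub>M (\<Pi>\<^sub>M i\<in>UNIV. uniform01)"
    by (rule measurable_PiM_single') (auto simp: rand_space_def intro!: measurable_component_singleton)
  then show ?thesis by (simp add: rand_space_def subtree_def[abs_def])
qed

lemma distr_subtree: "distr rand_space rand_space (subtree p) = rand_space"
proof -
  have eq: "subtree p = (\<lambda>\<omega>. \<lambda>q\<in>UNIV. \<omega> (q @ p))"
    by (auto simp: fun_eq_iff subtree_def)
  show ?thesis unfolding eq rand_space_def
    by (rule distr_PiM_reindex) (auto simp: inj_on_def intro: uniform01.prob_space_axioms)
qed

lemma measure_subtree_vimage: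
  assumes "E \<in> sets rand_space"
  shows "measure rand_space (subtree p -` E) = measure rand_space E"
  using measure_distr[OF measurable_subtree assms, of p] by (simp add: distr_subtree)

lemma measure_node_vimage:
  assumes "G \<in> sets borel"
  shows "measure rand_space ((\<lambda>\<omega>. \<omega> p) -` G) = measure uniform01 G"
  using measure_distr[OF measurable_node, of G p] assms by (simp add: distr_node)

lemma indep_nodes: "rand.indep_vars (\<lambda>_. uniform01) (\<lambda>p \<omega>. \<omega> p) UNIV"
proof (subst rand.indep_vars_iff_distr_eq_PiM)
  have id: "(\<lambda>\<omega>. \<lambda>p\<in>UNIV. \<omega> p) = (\<lambda>\<omega>::nat list \<Rightarrow> real. \<omega>)" by (auto simp: fun_eq_iff)
  show "distr rand_space (\<Pi>\<^sub>M p\<in>UNIV. uniform01) (\<lambda>\<omega>. \<lambda>p\<in>UNIV. \<omega> p)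
      = (\<Pi>\<^sub>M p\<in>UNIV. distr rand_space uniform01 (\<lambda>\<omega>. \<omega> p))"
    unfolding id distr_node by (simp add: rand_space_def distr_id2 sets_PiM cong: distr_cong)
qed (auto intro: measurable_node)

text \<open>The root and the two subtrees below it are driven by disjoint sets of nodes.\<close>
lemma measure_root_subtrees:
  assumes G: "G \<in> sets borel" and E1: "E1 \<in> sets rand_space" and E2: "E2 \<in> sets rand_space"
  shows "measure rand_space {\<omega>. \<omega> [] \<in> G \<and> subtree [0] \<omega> \<in> E1 \<and> subtree [1] \<omega> \<in> E2}
    = measure uniform01 G * measure rand_space E1 * measure rand_space E2"
proof -
  define K :: "nat \<Rightarrow> nat list set" where
    "K b = (if b = 0 then {[]} else range (\<lambda>q. q @ [b - 1]))" for b
  define restr where "restr b \<omega> = restrict \<omega> (K b)" for b and \<omega> :: "nat list \<Rightarrow> real"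
  have restr_subtree: "subtree [b] \<omega> = subtree [b] (restr (Suc b) \<omega>)" for b \<omega>
    by (simp add: subtree_def restr_def K_def fun_eq_iff)
  have disj: "disjoint_family_on K {0,1,2}" by (auto simp: disjoint_family_on_def K_def)
  have indep: "rand.indep_vars (\<lambda>b. \<Pi>\<^sub>M p\<in>K b. uniform01) restr {0,1,2}"
    unfolding restr_def by (rule rand.indep_vars_restrict[OF indep_nodes _ disj]) auto
  have subtree_meas: "subtree [b - 1] \<in> (\<Pi>\<^sub>M p\<in>K b. uniform01) \<rightarrow>\<^sub>M rand_space" if "b \<noteq> 0" for b
  proof -
    have "(\<lambda>f q. f (q @ [b - 1])) \<in> (\<Pi>\<^sub>M p\<in>K b. uniform01) \<rightarrow>\<^sub>M (\<Pi>\<^sub>M p\<in>UNIV. uniform01)"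
      using that by (intro measurable_PiM_single') (auto simp: K_def intro!: measurable_component_singleton)
    then show ?thesis by (simp add: rand_space_def subtree_def[abs_def])
  qed
  define A where "A b = (if b = 0 then (\<lambda>f. f []) -` G else if b = 1 then subtree [0] -` E1
      else subtree [1] -` E2) \<inter> space (\<Pi>\<^sub>M p\<in>K b. uniform01)" for b
  have A: "A b \<in> sets (\<Pi>\<^sub>M p\<in>K b. uniform01)" if "b \<in> {0,1,2}" for b
  proof -
    have "(\<lambda>f. f []) \<in> (\<Pi>\<^sub>M p\<in>K 0. uniform01) \<rightarrow>\<^sub>M uniform01"
      by (rule measurable_component_singleton) (simp add: K_def)
    then show ?thesis using that G measurable_sets[OF subtree_meas E1, of 1]
        measurable_sets[OF subtree_meas E2, of 2]
      by (auto simp: A_def intro: measurable_sets)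
  qed
  have pre: "restr 0 -` A 0 = (\<lambda>\<omega>. \<omega> []) -` G" "restr 1 -` A 1 = subtree [0] -` E1"
    "restr 2 -` A 2 = subtree [1] -` E2"
    using restr_subtree[of 0] restr_subtree[of 1]
    by (auto simp: A_def restr_def K_def space_PiM)
  have "{\<omega>. \<omega> [] \<in> G \<and> subtree [0] \<omega> \<in> E1 \<and> subtree [1] \<omega> \<in> E2}
      = (\<Inter>b\<in>{0,1,2}. restr b -` A b \<inter> space rand_space)"
    using pre by auto
  also have "measure rand_space \<dots> = (\<Prod>b\<in>{0,1,2}. measure rand_space (restr b -` A b \<inter> space rand_space))"
    by (rule rand.indep_varsD[OF indep]) (use A in auto)
  also have "\<dots> = measure uniform01 G * measure rand_space E1 * measure rand_space E2"
    using measure_node_vimage[OF G] measure_subtree_vimage[OF E1] measure_subtree_vimage[OF E2]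
    by (simp add: pre[simplified])
  finally show ?thesis .
qed

lemma simple_function_restrict:
  assumes "finite I" "\<And>i. i \<in> I \<Longrightarrow> simple_function M (f i)"
  shows "simple_function M (\<lambda>x. \<lambda>i\<in>I. f i x)"
  using assms
proof (induction I rule: finite_induct)
  case (insert i I)
  have "simple_function M (\<lambda>x. \<lambda>j\<in>I. f j x)" "simple_function M (f i)"
    using insert.IH insert.prems by blast+
  then have "simple_function M (\<lambda>x. (\<lambda>j\<in>I. f j x)(i := f i x))"
    by (rule simple_function_compose2)
  moreover have "(\<lambda>x. (\<lambda>j\<in>I. f j x)(i := f i x)) = (\<lambda>x. \<lambda>j\<in>insert i I. f j x)"
    by (auto simp: fun_eq_iff)
  ultimately show ?case by (simp only:)
qed (simp add: restrict_def)

lemma sets_borel_root_ball_eq: "finite S \<Longrightarrow> {u. root_ball sel d S u = T} \<in> sets borel"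
proof -
  assume "finite S"
  moreover have "{u. root_ball sel d S u = T} =
      {u. T \<subseteq> S \<and> (\<forall>z\<in>S. d (fst (sel S)) z \<le> u * diam d S \<longleftrightarrow> z \<in> T)}"
    by (auto simp: root_ball_def)
  ultimately show ?thesis by simp
qed

lemma simple_function_root_ball:
  assumes "finite S"
  shows "simple_function rand_space (\<lambda>\<omega>. root_ball sel d S (\<omega> p))"
  unfolding simple_function_def
proof
  show "finite ((\<lambda>\<omega>. root_ball sel d S (\<omega> p)) ` space rand_space)"
    by (rule finite_subset[of _ "Pow S"]) (use assms in \<open>auto simp: root_ball_def\<close>)
  have "(\<lambda>\<omega>. \<omega> p) -` {u. root_ball sel d S u = T} \<inter> space rand_space \<in> sets rand_space" for T
    using assms sets_borel_root_ball_eq by (intro measurable_sets[OF measurable_node]) simp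
  then show "\<forall>T\<in>(\<lambda>\<omega>. root_ball sel d S (\<omega> p)) ` space rand_space.
      (\<lambda>\<omega>. root_ball sel d S (\<omega> p)) -` {T} \<inter> space rand_space \<in> sets rand_space"
    by (simp add: vimage_def)
qed

text \<open>A node's output is a fixed function of its ball and of the tables of outputs of the two
  subcalls over all candidate parts \<open>T \<subseteq> S\<close>; these are finitely many simple functions.\<close>
lemma simple_function_recMSD:
  "finite S \<Longrightarrow> simple_function rand_space (\<lambda>\<omega>. recMSD sel d \<omega> p S t)"
proof (induction t arbitrary: p S)
  case (Suc t)
  define tables where "tables b \<omega> = (\<lambda>T\<in>Pow S. recMSD sel d \<omega> (b # p) T t)" for b \<omega>
  have tables: "simple_function rand_space (tables b)" for b
    unfolding tables_def
  proof (rule simple_function_restrict)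
    fix T assume "T \<in> Pow S"
    then have "finite T" using Suc.prems by (meson PowD finite_subset)
    then show "simple_function rand_space (\<lambda>\<omega>. recMSD sel d \<omega> (b # p) T t)" by (rule Suc.IH)
  qed (use Suc.prems in simp)
  define step where "step = (\<lambda>T (A, B). if t = 0 \<or> card S \<le> 1 then (\<lambda>_. {S})
      else combine d (Suc t) (A T) (B (S - T)) (\<lambda>_. {S}))"
  have "simple_function rand_space (\<lambda>\<omega>. step (root_ball sel d S (\<omega> p)) (tables 0 \<omega>, tables 1 \<omega>))"
    using simple_function_compose2[OF simple_function_root_ball[OF Suc.prems]
        simple_function_Pair[OF tables tables]] .
  moreover have "recMSD sel d \<omega> p S (Suc t) = step (root_ball sel d S (\<omega> p)) (tables 0 \<omega>, tables 1 \<omega>)"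
    for \<omega> by (simp add: step_def tables_def Let_def root_ball_def)
  ultimately show ?case by simp
qed simp

definition approx_event ::
    "('a set \<Rightarrow> 'a \<times> 'a) \<Rightarrow> ('a \<Rightarrow> 'a \<Rightarrow> real) \<Rightarrow> real \<Rightarrow> 'a set \<Rightarrow> nat \<Rightarrow> nat \<Rightarrow> (nat list \<Rightarrow> real) set" where
  "approx_event sel d \<epsilon> S t r =
     {\<omega> \<in> space rand_space. cost d (recMSD sel d \<omega> [] S t r) \<le> opt d r S / (1 - \<epsilon>)}"

lemma approx_event_sets: "finite S \<Longrightarrow> approx_event sel d \<epsilon> S t r \<in> sets rand_space"
  using simple_functionD(2)[OF simple_function_recMSD, of S sel d "[]" t
      "{A. cost d (A r) \<le> opt d r S / (1 - \<epsilon>)}"]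
  by (simp add: approx_event_def vimage_def)

lemma approx_event_eq_space:
  assumes "(1 - \<epsilon>) * diam d S \<le> opt d r S" "\<epsilon> < 1"
  shows "approx_event sel d \<epsilon> S t r = space rand_space"
proof -
  have "diam d S \<le> opt d r S / (1 - \<epsilon>)" using assms by (simp add: field_simps)
  then have "cost d (recMSD sel d \<omega> [] S t r) \<le> opt d r S / (1 - \<epsilon>)" for \<omega>
    using cost_recMSD_le_diam by (rule order_trans[rotated])
  then show ?thesis unfolding approx_event_def by blast
qed

subsection \<open>Radii that split no cluster\<close>

definition splits :: "('a \<Rightarrow> 'a \<Rightarrow> real) \<Rightarrow> 'a \<Rightarrow> real \<Rightarrow> 'a set \<Rightarrow> bool" where
  "splits d x R C \<longleftrightarrow> (\<exists>z\<in>C. d x z \<le> R) \<and> (\<exists>w\<in>C. R < d x w)"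

definition nonsplitting_radii :: "('a \<Rightarrow> 'a \<Rightarrow> real) \<Rightarrow> 'a \<Rightarrow> real \<Rightarrow> 'a set set \<Rightarrow> real set" where
  "nonsplitting_radii d x D Q = {u \<in> {0..<1}. \<forall>C\<in>Q. \<not> splits d x (u * D) C}"

lemma sets_borel_splits: "finite C \<Longrightarrow> {u. splits d x (u * D) C} \<in> sets borel"
  unfolding splits_def by measurable

lemma sets_borel_nonsplitting_radii:
  assumes "finite Q" "\<And>C. C \<in> Q \<Longrightarrow> finite C"
  shows "nonsplitting_radii d x D Q \<in> sets borel"
  using assms unfolding nonsplitting_radii_def splits_def by measurable

lemma measure_uniform01_atLeastLessThan_le:
  assumes "l \<le> h"
  shows "measure uniform01 {l..<h} \<le> h - l"
proof -
  have "measure uniform01 {l..<h} = measure lborel ({0..1} \<inter> {l..<h})"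
    by (subst measure_uniform_measure) auto
  also have "\<dots> \<le> measure lborel {l..h}"
    using assms by (intro measure_mono_fmeasurable) (auto simp: fmeasurable_def)
  finally show ?thesis using assms by simp
qed

lemma measure_uniform01_outside: "measure uniform01 (- {0..<1}) = 0"
proof -
  have "{0..1} \<inter> - {0..<1} = {1::real}" by auto
  then show ?thesis by (subst measure_uniform_measure) auto
qed

lemma measure_ge_by_root_partition:
  assumes "finite I" "disjoint_family_on G I" "\<And>i. i \<in> I \<Longrightarrow> G i \<in> sets borel"
    and "E \<in> sets rand_space"
    and "\<And>i. i \<in> I \<Longrightarrow> \<exists>H\<in>sets rand_space. H \<subseteq> E \<inter> {\<omega>. \<omega> [] \<in> G i} \<and>
      measure uniform01 (G i) * c \<le> measure rand_space H"
  shows "measure uniform01 (\<Union>i\<in>I. G i) * c \<le> measure rand_space E"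
proof -
  obtain H where H: "\<And>i. i \<in> I \<Longrightarrow> H i \<in> sets rand_space \<and> H i \<subseteq> E \<inter> {\<omega>. \<omega> [] \<in> G i} \<and>
      measure uniform01 (G i) * c \<le> measure rand_space (H i)"
    using assms(5) by metis
  have "disjoint_family_on H I"
    using assms(2) H unfolding disjoint_family_on_def by blast
  have "measure uniform01 (\<Union>i\<in>I. G i) = (\<Sum>i\<in>I. measure uniform01 (G i))"
    using assms(1-3) by (intro uniform01.finite_measure_finite_Union) auto
  then have "measure uniform01 (\<Union>i\<in>I. G i) * c = (\<Sum>i\<in>I. measure uniform01 (G i) * c)"
    by (simp only: sum_distrib_right)
  also have "\<dots> \<le> (\<Sum>i\<in>I. measure rand_space (H i))"
    using H by (intro sum_mono) auto
  also have "\<dots> = measure rand_space (\<Union>i\<in>I. H i)"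
    using assms(1) H \<open>disjoint_family_on H I\<close> by (intro rand.finite_measure_finite_Union[symmetric]) auto
  also have "\<dots> \<le> measure rand_space E"
    using assms(4) H by (intro rand.finite_measure_mono) auto
  finally show ?thesis .
qed

context finite_metric
begin

text \<open>The radii splitting \<open>C\<close> lie between the smallest and largest distance from \<open>x\<close> to \<open>C\<close>,
  which differ by at most \<open>diam d C\<close>.\<close>
lemma measure_splits_le:
  assumes "x \<in> X" "C \<subseteq> X" "D > 0"
  shows "measure uniform01 {u. splits d x (u * D) C} \<le> diam d C / D"
proof (cases "C = {}")
  case True
  then show ?thesis by (simp add: splits_def diam_def)
next
  case False
  have fin: "finite (d x ` C)" using finite_subspace[OF assms(2)] by simp
  obtain z where z: "z \<in> C" "d x z = Min (d x ` C)" using Min_in[OF fin] False by fastforce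
  obtain w where w: "w \<in> C" "d x w = Max (d x ` C)" using Max_in[OF fin] False by fastforce
  have "d x w \<le> d x z + d z w" using assms z w by (intro triangle) auto
  also have "d z w \<le> diam d C" using z w finite_subspace[OF assms(2)] by (intro diam_ge)
  finally have width: "d x w - d x z \<le> diam d C" by simp
  have "d x z \<le> d x w" unfolding z(2) using fin w(1) by (intro Min_le) auto
  have "{u. splits d x (u * D) C} \<subseteq> {d x z / D ..< d x w / D}"
  proof
    fix u assume "u \<in> {u. splits d x (u * D) C}"
    then obtain z' w' where "z' \<in> C" "d x z' \<le> u * D" "w' \<in> C" "u * D < d x w'"
      by (auto simp: splits_def)
    moreover have "d x z \<le> d x z'" "d x w' \<le> d x w" using fin z w \<open>z' \<in> C\<close> \<open>w' \<in> C\<close> by auto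
    ultimately show "u \<in> {d x z / D ..< d x w / D}" using assms(3) by (auto simp: field_simps)
  qed
  then have "measure uniform01 {u. splits d x (u * D) C} \<le> measure uniform01 {d x z / D ..< d x w / D}"
    by (intro uniform01.finite_measure_mono) auto
  also have "\<dots> \<le> d x w / D - d x z / D"
    using \<open>d x z \<le> d x w\<close> assms(3) by (intro measure_uniform01_atLeastLessThan_le divide_right_mono) auto
  also have "\<dots> \<le> diam d C / D" using width assms(3) by (simp add: diff_divide_distrib[symmetric] divide_right_mono)
  finally show ?thesis .
qed

lemma measure_nonsplitting_radii_ge:
  assumes "x \<in> X" "D > 0" "finite Q" "\<forall>C\<in>Q. C \<subseteq> X"
  shows "1 - cost d Q / D \<le> measure uniform01 (nonsplitting_radii d x D Q)"
proof -
  have fin: "finite C" if "C \<in> Q" for C using assms(4) that by (intro finite_subspace) auto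
  have split_sets: "{u. splits d x (u * D) C} \<in> sets borel" if "C \<in> Q" for C
    using fin[OF that] by (rule sets_borel_splits)
  have "- nonsplitting_radii d x D Q \<subseteq> - {0..<1} \<union> (\<Union>C\<in>Q. {u. splits d x (u * D) C})"
    by (auto simp: nonsplitting_radii_def)
  then have "measure uniform01 (- nonsplitting_radii d x D Q)
      \<le> measure uniform01 (- {0..<1} \<union> (\<Union>C\<in>Q. {u. splits d x (u * D) C}))"
    using assms(3) split_sets by (intro uniform01.finite_measure_mono sets.Un sets.finite_UN borel_comp) auto
  also have "\<dots> \<le> measure uniform01 (- {0..<1}) + measure uniform01 (\<Union>C\<in>Q. {u. splits d x (u * D) C})"
    using assms(3) split_sets by (intro measure_Un_le sets.finite_UN borel_comp) auto
  also have "\<dots> \<le> (\<Sum>C\<in>Q. measure uniform01 {u. splits d x (u * D) C})"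
    using uniform01.finite_measure_subadditive_finite[OF assms(3), of "\<lambda>C. {u. splits d x (u * D) C}"]
      split_sets measure_uniform01_outside by force
  also have "\<dots> \<le> (\<Sum>C\<in>Q. diam d C / D)"
    using assms by (intro sum_mono measure_splits_le) auto
  also have "\<dots> = cost d Q / D" by (simp add: cost_def sum_divide_distrib)
  finally show ?thesis
    using uniform01.prob_compl[of "nonsplitting_radii d x D Q"]
      sets_borel_nonsplitting_radii[OF assms(3) fin]
    by (simp add: Compl_eq_Diff_UNIV)
qed

lemma approx_event_of_split:
  assumes "S \<subseteq> X" "t \<noteq> 0" "\<not> card S \<le> 1" "root_ball sel d S (\<omega> []) = T" "\<epsilon> < 1"
    and ij: "1 \<le> i" "1 \<le> j" "i + j \<le> Suc t"
    and opt: "opt d i T + opt d j (S - T) \<le> opt d (i + j) S"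
    and sub: "subtree [0] \<omega> \<in> approx_event sel d \<epsilon> T t i"
      "subtree [1] \<omega> \<in> approx_event sel d \<epsilon> (S - T) t j"
  shows "\<omega> \<in> approx_event sel d \<epsilon> S (Suc t) (i + j)"
proof -
  define A where "A = recMSD sel d (subtree [0] \<omega>) [] T t i"
  define B where "B = recMSD sel d (subtree [1] \<omega>) [] (S - T) t j"
  have "T \<subseteq> S" using assms(4) by (auto simp: root_ball_def)
  then have clusters: "finite A" "finite B" "\<forall>C\<in>A \<union> B. C \<subseteq> X"
    using recMSD_clusters[of sel d "subtree [0] \<omega>" "[]" T t i]
      recMSD_clusters[of sel d "subtree [1] \<omega>" "[]" "S - T" t j] assms(1)
    unfolding A_def B_def by blast+
  have "cost d (recMSD sel d \<omega> [] S (Suc t) (i + j)) \<le> cost d (A \<union> B)"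
    unfolding recMSD_Suc_split[where \<omega>=\<omega>, OF assms(2-4)] A_def B_def using ij by (rule combine_cost_le_pair)
  also have "\<dots> \<le> cost d A + cost d B" using clusters by (rule cost_Un_le)
  also have "\<dots> \<le> opt d i T / (1 - \<epsilon>) + opt d j (S - T) / (1 - \<epsilon>)"
    using sub unfolding A_def B_def approx_event_def by simp
  also have "\<dots> \<le> opt d (i + j) S / (1 - \<epsilon>)"
    using opt assms(5) by (simp add: add_divide_distrib[symmetric] divide_right_mono)
  finally show ?thesis by (simp add: approx_event_def)
qed

lemma subcalls_event_lower_bound:
  assumes IH: "\<And>S' r'. S' \<subseteq> X \<Longrightarrow> S' \<noteq> {} \<Longrightarrow> 1 \<le> r' \<Longrightarrow> r' \<le> t \<Longrightarrow>
      \<epsilon> ^ (r' - 1) \<le> measure rand_space (approx_event sel d \<epsilon> S' t r')"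
    and S: "S \<subseteq> X" "\<not> card S \<le> 1" and T: "T \<subseteq> S" "T \<noteq> {}" "S - T \<noteq> {}"
    and ij: "1 \<le> i" "1 \<le> j" "i + j \<le> Suc t"
    and opt: "opt d i T + opt d j (S - T) \<le> opt d (i + j) S" and \<epsilon>: "0 \<le> \<epsilon>" "\<epsilon> < 1"
    and G: "G \<in> sets borel" "\<And>u. u \<in> G \<Longrightarrow> root_ball sel d S u = T"
  shows "\<exists>H\<in>sets rand_space. H \<subseteq> approx_event sel d \<epsilon> S (Suc t) (i + j) \<inter> {\<omega>. \<omega> [] \<in> G} \<and>
    measure uniform01 G * \<epsilon> ^ (i + j - 2) \<le> measure rand_space H"
proof -
  define A where "A = approx_event sel d \<epsilon> T t i"
  define B where "B = approx_event sel d \<epsilon> (S - T) t j"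
  define H where "H = {\<omega>. \<omega> [] \<in> G \<and> subtree [0] \<omega> \<in> A \<and> subtree [1] \<omega> \<in> B}"
  have "finite S" using S(1) by (rule finite_subspace)
  then have "finite T" "finite (S - T)" using finite_subset[OF T(1)] by auto
  then have AB: "A \<in> sets rand_space" "B \<in> sets rand_space"
    by (simp_all add: A_def B_def approx_event_sets)
  have "H = (\<lambda>\<omega>. \<omega> []) -` G \<inter> space rand_space \<inter> (subtree [0] -` A \<inter> space rand_space)
      \<inter> (subtree [1] -` B \<inter> space rand_space)"
    by (auto simp: H_def)
  then have "H \<in> sets rand_space"
    using measurable_sets[OF measurable_node] measurable_sets[OF measurable_subtree] G(1) AB by auto
  moreover have "H \<subseteq> approx_event sel d \<epsilon> S (Suc t) (i + j)"
  proof
    fix \<omega> assume "\<omega> \<in> H"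
    then have "root_ball sel d S (\<omega> []) = T" "subtree [0] \<omega> \<in> A" "subtree [1] \<omega> \<in> B"
      using G(2) by (auto simp: H_def)
    moreover have "t \<noteq> 0" using ij by simp
    ultimately show "\<omega> \<in> approx_event sel d \<epsilon> S (Suc t) (i + j)"
      using approx_event_of_split[OF S(1) _ S(2) _ \<epsilon>(2) ij opt] unfolding A_def B_def by simp
  qed
  moreover have "measure uniform01 G * \<epsilon> ^ (i + j - 2) \<le> measure rand_space H"
  proof -
    have "i + j - 2 = (i - 1) + (j - 1)" using ij by simp
    then have "\<epsilon> ^ (i + j - 2) = \<epsilon> ^ (i - 1) * \<epsilon> ^ (j - 1)" by (simp only: power_add)
    also have "\<dots> \<le> measure rand_space A * measure rand_space B"
      unfolding A_def B_def using ij S(1) T \<epsilon> by (intro mult_mono IH) auto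
    finally show ?thesis
      unfolding H_def measure_root_subtrees[OF G(1) AB] mult.assoc by (simp add: mult_left_mono)
  qed
  ultimately show ?thesis by (auto simp: H_def)
qed


end

subsection \<open>Success probability\<close>

locale recMSD_analysis = finite_metric X d for X :: "'a set" and d +
  fixes sel :: "'a set \<Rightarrow> 'a \<times> 'a"
  assumes selector: "diam_selector X d sel"
begin

lemma root_ball_separates:
  assumes "S \<subseteq> X" "S \<noteq> {}" "0 \<le> u" "u < 1" "0 < diam d S"
  shows "fst (sel S) \<in> root_ball sel d S u" "snd (sel S) \<in> S - root_ball sel d S u"
proof -
  have sel: "fst (sel S) \<in> S" "snd (sel S) \<in> S" "d (fst (sel S)) (snd (sel S)) = diam d S"
    using selector assms(1,2) by (auto simp: diam_selector_def)
  then show "fst (sel S) \<in> root_ball sel d S u"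
    using assms dist_self by (auto simp: root_ball_def)
  have "u * diam d S < diam d S" using assms(4,5) by simp
  then show "snd (sel S) \<in> S - root_ball sel d S u"
    using sel by (auto simp: root_ball_def)
qed

lemma nonsplitting_root_ball:
  assumes "C \<subseteq> S" "\<not> splits d (fst (sel S)) (u * diam d S) C"
  shows "C \<subseteq> root_ball sel d S u \<or> C \<subseteq> S - root_ball sel d S u"
  using assms by (auto simp: splits_def root_ball_def not_le)

lemma split_event_lower_bound:
  assumes IH: "\<And>S' r'. S' \<subseteq> X \<Longrightarrow> S' \<noteq> {} \<Longrightarrow> 1 \<le> r' \<Longrightarrow> r' \<le> t \<Longrightarrow>
      \<epsilon> ^ (r' - 1) \<le> measure rand_space (approx_event sel d \<epsilon> S' t r')"
    and S: "S \<subseteq> X" "S \<noteq> {}" "0 < diam d S" and r: "r \<le> Suc t" and \<epsilon>: "0 \<le> \<epsilon>" "\<epsilon> < 1"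
    and Q: "is_clustering r S Q" "{} \<notin> Q" "cost d Q = opt d r S"
    and G: "G \<in> sets borel" "\<And>u. u \<in> G \<Longrightarrow>
      u \<in> nonsplitting_radii d (fst (sel S)) (diam d S) Q \<and> root_ball sel d S u = T"
  shows "\<exists>H\<in>sets rand_space. H \<subseteq> approx_event sel d \<epsilon> S (Suc t) r \<inter> {\<omega>. \<omega> [] \<in> G} \<and>
    measure uniform01 G * \<epsilon> ^ (r - 2) \<le> measure rand_space H"
proof (cases "G = {}")
  case False
  then obtain u where u: "0 \<le> u" "u < 1" "\<forall>C\<in>Q. \<not> splits d (fst (sel S)) (u * diam d S) C"
      "root_ball sel d S u = T"
    using G(2) by (auto simp: nonsplitting_radii_def)
  note sep = root_ball_separates[OF S(1,2) u(1,2) S(3), unfolded u(4)]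
  have "T \<subseteq> S" using u(4) by (auto simp: root_ball_def)
  have T_ne: "T \<noteq> {}" "S - T \<noteq> {}" using sep by auto
  have uncut: "\<forall>C\<in>Q. C \<subseteq> T \<or> C \<subseteq> S - T"
  proof
    fix C assume "C \<in> Q"
    then have "C \<subseteq> S" using Q(1) by (auto simp: is_clustering_def)
    then show "C \<subseteq> T \<or> C \<subseteq> S - T"
      using nonsplitting_root_ball u(3) \<open>C \<in> Q\<close> unfolding u(4)[symmetric] by blast
  qed
  obtain i j Q1 Q2 where split: "is_clustering i T Q1" "is_clustering j (S - T) Q2"
      "1 \<le> i" "1 \<le> j" "i + j = r" "cost d Q1 + cost d Q2 = cost d Q"
    by (rule clustering_split[OF Q(1,2) \<open>T \<subseteq> S\<close> T_ne uncut])
  have "finite S" using S(1) by (rule finite_subspace)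
  then have fin: "finite T" "finite (S - T)" using finite_subset[OF \<open>T \<subseteq> S\<close>] by auto
  have opt: "opt d i T + opt d j (S - T) \<le> opt d (i + j) S"
    using add_mono[OF opt_le[where d=d, OF fin(1) split(1)] opt_le[where d=d, OF fin(2) split(2)]]
      split(5,6) Q(3)
    by simp
  have "card {fst (sel S), snd (sel S)} \<le> card S"
    by (rule card_mono[OF \<open>finite S\<close>]) (use sep \<open>T \<subseteq> S\<close> in auto)
  moreover have "fst (sel S) \<noteq> snd (sel S)" using sep by auto
  ultimately have card_S: "\<not> card S \<le> 1" by simp
  have "\<And>u. u \<in> G \<Longrightarrow> root_ball sel d S u = T" using G(2) by blast
  then show ?thesis
    using subcalls_event_lower_bound[OF IH S(1) card_S \<open>T \<subseteq> S\<close> T_ne split(3,4) _ opt \<epsilon> G(1)]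
      split(5) r
    by simp
qed (intro bexI[of _ "{}"], simp_all)

lemma approx_event_prob_Suc_nonsplitting:
  assumes IH: "\<And>S' r'. S' \<subseteq> X \<Longrightarrow> S' \<noteq> {} \<Longrightarrow> 1 \<le> r' \<Longrightarrow> r' \<le> t \<Longrightarrow>
      \<epsilon> ^ (r' - 1) \<le> measure rand_space (approx_event sel d \<epsilon> S' t r')"
    and S: "S \<subseteq> X" "S \<noteq> {}" "0 < diam d S" and r: "2 \<le> r" "r \<le> Suc t" and \<epsilon>: "0 \<le> \<epsilon>" "\<epsilon> < 1"
    and Q: "is_clustering r S Q" "{} \<notin> Q" "cost d Q = opt d r S"
    and nonsplitting: "\<epsilon> \<le> measure uniform01 (nonsplitting_radii d (fst (sel S)) (diam d S) Q)"
  shows "\<epsilon> ^ (r - 1) \<le> measure rand_space (approx_event sel d \<epsilon> S (Suc t) r)"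
proof -
  define R where "R = nonsplitting_radii d (fst (sel S)) (diam d S) Q"
  define G where "G T = {u \<in> R. root_ball sel d S u = T}" for T
  have fin: "finite S" using S(1) by (rule finite_subspace)
  have "u \<in> (\<Union>T\<in>Pow S. G T)" if "u \<in> R" for u
  proof
    show "root_ball sel d S u \<in> Pow S" by (auto simp: root_ball_def)
    show "u \<in> G (root_ball sel d S u)" using that by (simp add: G_def)
  qed
  then have R_eq: "(\<Union>T\<in>Pow S. G T) = R" by (auto simp: G_def)
  have "R \<in> sets borel"
    using Q(1) S(1) unfolding R_def
    by (intro sets_borel_nonsplitting_radii finite_subspace) (auto simp: is_clustering_def)
  then have G_sets: "G T \<in> sets borel" for T
    using sets_borel_root_ball_eq[OF fin, of sel d T] by (simp add: G_def Collect_conj_eq)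
  have G_mem: "u \<in> R \<and> root_ball sel d S u = T" if "u \<in> G T" for u T
    using that by (simp add: G_def)
  have "r - 1 = Suc (r - 2)" using r(1) by simp
  then have "\<epsilon> ^ (r - 1) = \<epsilon> * \<epsilon> ^ (r - 2)" by simp
  also have "\<dots> \<le> measure uniform01 (\<Union>T\<in>Pow S. G T) * \<epsilon> ^ (r - 2)"
    using nonsplitting \<epsilon>(1) unfolding R_eq R_def by (intro mult_right_mono) simp_all
  also have "\<dots> \<le> measure rand_space (approx_event sel d \<epsilon> S (Suc t) r)"
  proof (rule measure_ge_by_root_partition)
    show "disjoint_family_on G (Pow S)" unfolding disjoint_family_on_def G_def by blast
    show "approx_event sel d \<epsilon> S (Suc t) r \<in> sets rand_space" using fin by (rule approx_event_sets)
    show "\<exists>H\<in>sets rand_space. H \<subseteq> approx_event sel d \<epsilon> S (Suc t) r \<inter> {\<omega>. \<omega> [] \<in> G T} \<and>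
        measure uniform01 (G T) * \<epsilon> ^ (r - 2) \<le> measure rand_space H" for T
      using split_event_lower_bound[OF IH S r(2) \<epsilon> Q G_sets G_mem[unfolded R_def]] .
  qed (use fin G_sets in simp_all)
  finally show ?thesis .
qed

lemma approx_event_prob_Suc:
  assumes IH: "\<And>S' r'. S' \<subseteq> X \<Longrightarrow> S' \<noteq> {} \<Longrightarrow> 1 \<le> r' \<Longrightarrow> r' \<le> t \<Longrightarrow>
      \<epsilon> ^ (r' - 1) \<le> measure rand_space (approx_event sel d \<epsilon> S' t r')"
    and S: "S \<subseteq> X" "S \<noteq> {}" and r: "1 \<le> r" "r \<le> Suc t" and \<epsilon>: "0 \<le> \<epsilon>" "\<epsilon> < 1"
  shows "\<epsilon> ^ (r - 1) \<le> measure rand_space (approx_event sel d \<epsilon> S (Suc t) r)"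
proof (cases "(1 - \<epsilon>) * diam d S \<le> opt d r S")
  case True
  then have "approx_event sel d \<epsilon> S (Suc t) r = space rand_space"
    using \<epsilon>(2) by (rule approx_event_eq_space)
  then show ?thesis using \<epsilon> rand.prob_space by (simp add: power_le_one)
next
  case False
  define x where "x = fst (sel S)"
  define D where "D = diam d S"
  obtain Q where Q: "is_clustering r S Q" "{} \<notin> Q" "cost d Q = opt d r S"
    using opt_attained[OF finite_subspace[OF S(1)] r(1)] by metis
  have cost_lt: "cost d Q < (1 - \<epsilon>) * D" using False Q(3) by (simp add: D_def)
  have "0 < (1 - \<epsilon>) * D" using cost_lt opt_nonneg[OF S(1) r(1)] Q(3) by linarith
  then have "0 < D" using \<epsilon> by (simp add: zero_less_mult_iff)
  have sel: "x \<in> S" "snd (sel S) \<in> S" "d x (snd (sel S)) = D"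
    using selector[unfolded diam_selector_def, rule_format, OF conjI[OF S]]
    by (simp_all add: x_def D_def)
  have "(1 - \<epsilon>) * D \<le> D" using \<open>0 < D\<close> \<epsilon> by simp
  then have "2 \<le> r"
    using clustering_card_ge_2[OF Q(1) S(1) sel(1,2)] cost_lt sel(3) by linarith
  have "cost d Q / D \<le> 1 - \<epsilon>" using cost_lt \<open>0 < D\<close> by (simp add: divide_le_eq)
  moreover have "finite Q" "\<forall>C\<in>Q. C \<subseteq> X" using Q(1) S(1) by (auto simp: is_clustering_def)
  ultimately have "\<epsilon> \<le> measure uniform01 (nonsplitting_radii d x D Q)"
    using measure_nonsplitting_radii_ge[OF _ \<open>0 < D\<close>, of x Q] sel(1) S(1) by auto
  then show ?thesis
    using \<open>0 < D\<close> \<open>2 \<le> r\<close> unfolding x_def D_def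
    by (intro approx_event_prob_Suc_nonsplitting[OF IH S _ _ r(2) \<epsilon> Q]) simp_all
qed

lemma approx_event_prob_ge:
  assumes "S \<subseteq> X" "S \<noteq> {}" "1 \<le> r" "r \<le> t" "0 \<le> \<epsilon>" "\<epsilon> < 1"
  shows "\<epsilon> ^ (r - 1) \<le> measure rand_space (approx_event sel d \<epsilon> S t r)"
  using assms(1-4)
proof (induction t arbitrary: S r)
  case (Suc t)
  then show ?case using approx_event_prob_Suc[OF Suc.IH _ _ _ _ assms(5,6)] by blast
qed simp

end

theorem lemma2:
  fixes X :: "'a set" and d :: "'a \<Rightarrow> 'a \<Rightarrow> real" and k t r :: nat
    and S :: "'a set" and \<epsilon> :: real and sel :: "'a set \<Rightarrow> 'a \<times> 'a"
  assumes "finite X" and "metric_on X d" and "k > 0"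
    and "diam_selector X d sel"
    and "S \<subseteq> X" and "S \<noteq> {}"
    and "1 \<le> t" and "t \<le> k"
    and "0 \<le> \<epsilon>" and "\<epsilon> < 1"
    and "1 \<le> r" and "r \<le> t"
  shows "measure rand_space
           {\<omega> \<in> space rand_space. cost d (recMSD sel d \<omega> [] S t r) \<le> opt d r S / (1 - \<epsilon>)}
         \<ge> \<epsilon> ^ (r - 1)"
proof -
  interpret recMSD_analysis X d sel
    using assms(1,2,4) by unfold_locales
  show ?thesis
    using approx_event_prob_ge[OF assms(5,6,11,12,9,10)] by (simp add: approx_event_def)
qed

end
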